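(* Let $p\ge 1$ and $c>0$ be constants and let $a>0$. Let $x_a$ denote the unique (maximal) solution of the initial value problem $$x'''+c\,x^p\, x''=0,\qquad x(0)=0=x'(0),\quad x''(0)=a.$$ Then $x_a$ is defined for all $t\ge 0$. *)

theory Defs
  imports Complex_Main
begin

definition ivp_solution :: "real \<Rightarrow> real \<Rightarrow> real \<Rightarrow> real set \<Rightarrow> (real \<Rightarrow> real) \<Rightarrow> bool" where
  "ivp_solution p c a I x \<longleftrightarrow>
     (\<exists>x1 x2. x 0 = 0 \<and> x1 0 = 0 \<and> x2 0 = a \<and>
       (\<forall>t\<in>I. (x has_real_derivative x1 t) (at t within I) \<and>
               (x1 has_real_derivative x2 t) (at t within I) \<and>
               (x2 has_real_derivative (- c * (x t powr p) * x2 t)) (at t within I)))"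

end

theory Submission
  imports Defs "HOL-Analysis.Analysis"
begin

text \<open>
  Integrating the equation once gives the first integral
  \<open>x''(t) = a exp(-c \<integral>\<^sub>0\<^sup>t x\<^sup>p)\<close>, so every solution is a fixed point of
  \<open>F x (t) = \<integral>\<^sub>0\<^sup>t \<integral>\<^sub>0\<^sup>s a exp(-c \<integral>\<^sub>0\<^sup>r x\<^sup>p) dr ds\<close>.
  Since \<open>0 < x'' \<le> a\<close>, every function of the form \<open>F z\<close> satisfies \<open>0 \<le> F z (t) \<le> a t\<^sup>2\<close>:
  there is no room for blow-up. On \<open>[0, b]\<close> all relevant functions are therefore bounded by
  \<open>a b\<^sup>2\<close>, where \<open>F\<close> satisfies the Volterra-type Lipschitz estimate
  \<open>|F z t - F w t| \<le> K \<integral>\<^sub>0\<^sup>t |z - w|\<close>. Iterating it yields factorial bounds, so the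
  Picard iterates converge on every bounded interval and two fixed points coincide.
\<close>

text \<open>Real \<open>ln\<close> is extended evenly to negative arguments, so \<open>powr\<close> ignores the sign of the base.\<close>

lemma powr_real_abs: "(z::real) powr p = \<bar>z\<bar> powr p"
  by (cases "z \<ge> 0") (auto simp: uminus_powr_eq[of z p, symmetric])

lemma powr_diff_le:
  fixes u v B p :: real
  assumes "1 \<le> p" "0 \<le> v" "v \<le> u" "u \<le> B"
  shows "u powr p - v powr p \<le> p * B powr (p - 1) * (u - v)"
proof (cases "v = 0")
  case True
  show ?thesis
  proof (cases "u = 0")
    case False
    hence u: "u > 0" using assms by simp
    have "u powr p = u * u powr (p - 1)" using u by (simp add: powr_mult_base)
    also have "\<dots> \<le> u * B powr (p - 1)"
      using assms u by (intro mult_left_mono powr_mono2) auto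
    also have "\<dots> \<le> p * B powr (p - 1) * u"
      using assms u by (simp add: mult_right_mono)
    finally show ?thesis using True by simp
  qed (use True in simp)
next
  case False
  hence v: "v > 0" using assms by simp
  show ?thesis
  proof (cases "v = u")
    case False
    hence "v < u" using assms by simp
    have "((\<lambda>z. z powr p) has_real_derivative (p * z powr (p - 1))) (at z)" if "v \<le> z" for z
      using v that by (auto intro!: has_real_derivative_powr)
    from MVT2[OF \<open>v < u\<close> this]
    obtain z where z: "v < z" "z < u" "u powr p - v powr p = (u - v) * (p * z powr (p - 1))"
      by blast
    have "z powr (p - 1) \<le> B powr (p - 1)" using z assms v by (intro powr_mono2) auto
    hence "(u - v) * (p * z powr (p - 1)) \<le> (u - v) * (p * B powr (p - 1))"
      using z assms by (intro mult_left_mono) auto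
    thus ?thesis using z by (simp add: algebra_simps)
  qed simp
qed

lemma abs_powr_diff_le:
  fixes u v B p :: real
  assumes "1 \<le> p" "\<bar>u\<bar> \<le> B" "\<bar>v\<bar> \<le> B"
  shows "\<bar>u powr p - v powr p\<bar> \<le> p * B powr (p - 1) * \<bar>u - v\<bar>"
proof -
  have "\<bar>u powr p - v powr p\<bar> = \<bar>\<bar>u\<bar> powr p - \<bar>v\<bar> powr p\<bar>"
    by (simp add: powr_real_abs[of u] powr_real_abs[of v])
  also have "\<dots> \<le> p * B powr (p - 1) * \<bar>\<bar>u\<bar> - \<bar>v\<bar>\<bar>"
  proof (cases "\<bar>v\<bar> \<le> \<bar>u\<bar>")
    case True
    thus ?thesis using assms powr_diff_le[of p "\<bar>v\<bar>" "\<bar>u\<bar>" B] powr_mono2[of p "\<bar>v\<bar>" "\<bar>u\<bar>"]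
      by simp
  next
    case False
    thus ?thesis using assms powr_diff_le[of p "\<bar>u\<bar>" "\<bar>v\<bar>" B] powr_mono2[of p "\<bar>u\<bar>" "\<bar>v\<bar>"]
      by simp
  qed
  also have "\<dots> \<le> p * B powr (p - 1) * \<bar>u - v\<bar>"
    using assms by (intro mult_left_mono) auto
  finally show ?thesis .
qed

lemma abs_exp_minus_diff_le:
  fixes u v :: real
  assumes "0 \<le> u" "0 \<le> v"
  shows "\<bar>exp (- u) - exp (- v)\<bar> \<le> \<bar>u - v\<bar>"
proof -
  have *: "exp (- u) - exp (- v) \<le> v - u" if "0 \<le> u" "u \<le> v" for u v :: real
  proof -
    have "exp (- u) - exp (- v) = exp (- u) * (1 - exp (u - v))"
      by (simp add: algebra_simps flip: exp_add)
    also have "\<dots> \<le> 1 * (v - u)"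
      using that exp_ge_add_one_self[of "u - v"] by (intro mult_mono) (auto simp del: exp_ge_add_one_self)
    finally show ?thesis by simp
  qed
  show ?thesis using assms *[of u v] *[of v u] by (cases "u \<le> v") auto
qed

text \<open>No integrability hypothesis is needed: a non-integrable function has integral \<open>0\<close>.\<close>

lemma integral_nonneg_Icc:
  fixes f :: "real \<Rightarrow> real"
  assumes "\<And>x. x \<in> {a..b} \<Longrightarrow> 0 \<le> f x"
  shows "0 \<le> integral {a..b} f"
  using assms integral_nonneg not_integrable_integral by (metis order.refl)

lemma integral_le_const_Icc:
  fixes f :: "real \<Rightarrow> real"
  assumes "continuous_on {0..t} f" "0 \<le> t" "\<And>x. x \<in> {0..t} \<Longrightarrow> f x \<le> M"
  shows "integral {0..t} f \<le> t * M"
proof -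
  have "integral {0..t} f \<le> integral {0..t} (\<lambda>_. M)"
    using assms integrable_continuous_interval by (intro integral_le) auto
  thus ?thesis using assms(2) by simp
qed

lemma abs_integral_diff_le_const:
  fixes f g :: "real \<Rightarrow> real"
  assumes "continuous_on {0..t} f" "continuous_on {0..t} g" "0 \<le> t"
    and "\<And>x. x \<in> {0..t} \<Longrightarrow> \<bar>f x - g x\<bar> \<le> M"
  shows "\<bar>integral {0..t} f - integral {0..t} g\<bar> \<le> t * M"
proof -
  have fg: "f integrable_on {0..t}" "g integrable_on {0..t}"
    using assms integrable_continuous_interval by blast+
  hence "\<bar>integral {0..t} f - integral {0..t} g\<bar> = norm (integral {0..t} (\<lambda>x. f x - g x))"
    by (simp add: integral_diff)
  also have "\<dots> \<le> integral {0..t} (\<lambda>_. M)"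
    using fg assms(4) by (intro integral_norm_bound_integral) (auto intro!: integrable_diff)
  finally show ?thesis using assms(3) by simp
qed

lemma integral_power_Icc:
  fixes r :: real
  assumes "0 \<le> r"
  shows "integral {0..r} (\<lambda>s. s ^ n) = r ^ Suc n / Suc n"
proof -
  have "((\<lambda>s. s ^ Suc n / Suc n) has_real_derivative s ^ n) (at s within {0..r})" for s
    using DERIV_cdivide[OF DERIV_pow[of "Suc n" s], of "Suc n"] by (simp del: of_nat_Suc)
  hence "((\<lambda>s. s ^ n) has_integral (r ^ Suc n / Suc n - 0 ^ Suc n / Suc n)) {0..r}"
    using assms by (intro fundamental_theorem_of_calculus)
      (auto simp flip: has_real_derivative_iff_has_vector_derivative)
  thus ?thesis by (simp add: integral_unique)
qed

lemma volterra_iteration_bound: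
  fixes d :: "nat \<Rightarrow> real \<Rightarrow> real"
  assumes cont: "\<And>n. continuous_on {0..b} (d n)"
    and base: "\<And>r. r \<in> {0..b} \<Longrightarrow> \<bar>d 0 r\<bar> \<le> M"
    and step: "\<And>n r. r \<in> {0..b} \<Longrightarrow> \<bar>d (Suc n) r\<bar> \<le> K * integral {0..r} (\<lambda>s. \<bar>d n s\<bar>)"
    and "0 \<le> K" "r \<in> {0..b}"
  shows "\<bar>d n r\<bar> \<le> M * (K * r) ^ n / fact n"
  using \<open>r \<in> {0..b}\<close>
proof (induction n arbitrary: r)
  case 0
  thus ?case using base by simp
next
  case (Suc n)
  have sub: "{0..r} \<subseteq> {0..b}" using Suc.prems by auto
  have "integral {0..r} (\<lambda>s. \<bar>d n s\<bar>) \<le> integral {0..r} (\<lambda>s. M * K ^ n / fact n * s ^ n)"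
    using Suc.IH sub continuous_on_subset[OF cont sub]
    by (intro integral_le integrable_continuous_interval continuous_intros)
      (auto simp: power_mult_distrib mult.assoc)
  also have "\<dots> = M * K ^ n * r ^ Suc n / fact (Suc n)"
    using Suc.prems by (simp add: integral_power_Icc)
  finally have "K * integral {0..r} (\<lambda>s. \<bar>d n s\<bar>) \<le> K * (M * K ^ n * r ^ Suc n / fact (Suc n))"
    using \<open>0 \<le> K\<close> by (intro mult_left_mono)
  also have "\<dots> = M * (K * r) ^ Suc n / fact (Suc n)"
    by (simp add: power_mult_distrib)
  finally show ?case using step[OF Suc.prems, of n] by linarith
qed

lemma power_over_fact_tendsto_0: "(\<lambda>n. M * (x::real) ^ n / fact n) \<longlonglongrightarrow> 0"
  using tendsto_mult_right_zero[OF summable_LIMSEQ_zero[OF summable_exp[of x]], of M]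
  by (simp add: field_simps)

lemma convergent_if_summable_diff:
  fixes f :: "nat \<Rightarrow> real"
  assumes "summable (\<lambda>n. f (Suc n) - f n)"
  shows "convergent f"
proof -
  have "convergent (\<lambda>n. \<Sum>i<n. f (Suc i) - f i)"
    using assms by (simp add: summable_iff_convergent)
  hence "convergent (\<lambda>n. f n - f 0)"
    by (simp add: sum_lessThan_telescope)
  thus ?thesis
    using convergent_add_const_iff[of "- f 0" f] by simp
qed

lemma bounded_convergence_integral_Icc:
  fixes f :: "nat \<Rightarrow> real \<Rightarrow> real"
  assumes "\<And>k. continuous_on {a..b} (f k)" "\<And>k x. x \<in> {a..b} \<Longrightarrow> \<bar>f k x\<bar> \<le> M"
    and "\<And>x. x \<in> {a..b} \<Longrightarrow> (\<lambda>k. f k x) \<longlonglongrightarrow> g x"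
  shows "g integrable_on {a..b}" "(\<lambda>k. integral {a..b} (f k)) \<longlonglongrightarrow> integral {a..b} g"
  using dominated_convergence[where f=f and g=g and h="\<lambda>_. M", OF integrable_continuous_interval[OF assms(1)]
      integrable_const_ivl] assms(2,3) by auto

lemma integral_eq_of_deriv:
  fixes f f' :: "real \<Rightarrow> real"
  assumes "0 \<le> r" "f 0 = 0" "\<And>x. x \<in> {0..r} \<Longrightarrow> (f has_real_derivative f' x) (at x within {0..r})"
  shows "integral {0..r} f' = f r"
proof -
  have "(f' has_integral (f r - f 0)) {0..r}"
    using assms by (intro fundamental_theorem_of_calculus)
      (auto simp flip: has_real_derivative_iff_has_vector_derivative)
  thus ?thesis using assms(2) by (simp add: integral_unique)
qed

lemma at_within_Icc_eq_Ici:
  fixes t b :: real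
  assumes "0 \<le> t" "t < b"
  shows "at t within {0..b} = at t within {0..}"
  by (rule at_within_nhd[where S="{..<b}"]) (use assms in auto)

locale third_order_ivp =
  fixes p c a :: real
  assumes p_ge_1: "1 \<le> p" and c_pos: "0 < c" and a_pos: "0 < a"
begin

text \<open>
  For a solution \<open>x\<close> of the initial value problem, \<open>accel x\<close>, \<open>velocity x\<close> and \<open>picard x\<close>
  are \<open>x''\<close>, \<open>x'\<close> and \<open>x\<close>; \<open>picard\<close> is the operator \<open>F\<close>.
\<close>

definition powr_integral :: "(real \<Rightarrow> real) \<Rightarrow> real \<Rightarrow> real" where
  "powr_integral z t = integral {0..t} (\<lambda>r. z r powr p)"

definition accel :: "(real \<Rightarrow> real) \<Rightarrow> real \<Rightarrow> real" where
  "accel z t = a * exp (- c * powr_integral z t)"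

definition velocity :: "(real \<Rightarrow> real) \<Rightarrow> real \<Rightarrow> real" where
  "velocity z t = integral {0..t} (accel z)"

definition picard :: "(real \<Rightarrow> real) \<Rightarrow> real \<Rightarrow> real" where
  "picard z t = integral {0..t} (velocity z)"

lemma powr_integral_nonneg: "0 \<le> powr_integral z t"
  unfolding powr_integral_def by (intro integral_nonneg_Icc) simp

lemma accel_pos: "0 < accel z t"
  using a_pos by (simp add: accel_def)

lemma accel_le: "accel z t \<le> a"
  using a_pos c_pos powr_integral_nonneg[of z t] by (simp add: accel_def)

lemma abs_accel_diff_le: "\<bar>accel z t - accel w t\<bar> \<le> a * c * \<bar>powr_integral z t - powr_integral w t\<bar>"
proof -
  have "\<bar>accel z t - accel w t\<bar> = a * \<bar>exp (- (c * powr_integral z t)) - exp (- (c * powr_integral w t))\<bar>"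
    using a_pos by (simp add: accel_def abs_mult right_diff_distrib[symmetric])
  also have "\<dots> \<le> a * \<bar>c * powr_integral z t - c * powr_integral w t\<bar>"
    using a_pos c_pos powr_integral_nonneg by (intro mult_left_mono abs_exp_minus_diff_le) auto
  finally show ?thesis
    using c_pos by (simp add: abs_mult right_diff_distrib[symmetric] mult.assoc)
qed

context
  fixes z :: "real \<Rightarrow> real" and b :: real
  assumes continuous_z: "continuous_on {0..b} z"
begin

lemma continuous_on_powr_comp: "continuous_on {0..b} (\<lambda>r. z r powr p)"
proof -
  have "continuous_on {0..b} (\<lambda>r. \<bar>z r\<bar> powr p)"
    using p_ge_1 by (intro continuous_on_powr' continuous_intros continuous_z) auto
  thus ?thesis by (simp flip: powr_real_abs)
qed

lemma powr_integral_has_real_derivative: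
  "t \<in> {0..b} \<Longrightarrow> (powr_integral z has_real_derivative z t powr p) (at t within {0..b})"
  unfolding powr_integral_def[abs_def]
  by (rule integral_has_real_derivative[OF continuous_on_powr_comp])

lemma accel_has_real_derivative:
  "t \<in> {0..b} \<Longrightarrow> (accel z has_real_derivative - c * z t powr p * accel z t) (at t within {0..b})"
  unfolding accel_def[abs_def]
  by (rule derivative_eq_intros powr_integral_has_real_derivative refl | assumption | simp)+

lemma continuous_on_accel: "continuous_on {0..b} (accel z)"
  using accel_has_real_derivative by (rule DERIV_continuous_on)

lemma velocity_has_real_derivative:
  "t \<in> {0..b} \<Longrightarrow> (velocity z has_real_derivative accel z t) (at t within {0..b})"
  unfolding velocity_def[abs_def] by (rule integral_has_real_derivative[OF continuous_on_accel])

lemma continuous_on_velocity: "continuous_on {0..b} (velocity z)"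
  using velocity_has_real_derivative by (rule DERIV_continuous_on)

lemma picard_has_real_derivative:
  "t \<in> {0..b} \<Longrightarrow> (picard z has_real_derivative velocity z t) (at t within {0..b})"
  unfolding picard_def[abs_def] by (rule integral_has_real_derivative[OF continuous_on_velocity])

lemma continuous_on_picard: "continuous_on {0..b} (picard z)"
  using picard_has_real_derivative by (rule DERIV_continuous_on)

lemma velocity_bounds:
  assumes "t \<in> {0..b}"
  shows "0 \<le> velocity z t \<and> velocity z t \<le> a * t"
proof -
  have "continuous_on {0..t} (accel z)"
    using continuous_on_subset[OF continuous_on_accel] assms by auto
  thus ?thesis unfolding velocity_def
    using integral_le_const_Icc[of t "accel z" a] integral_nonneg_Icc[of 0 t "accel z"]
      accel_le accel_pos[THEN less_imp_le] assms by (auto simp: mult.commute)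
qed

lemma picard_bounds:
  assumes "t \<in> {0..b}"
  shows "0 \<le> picard z t \<and> picard z t \<le> a * t\<^sup>2"
proof -
  have "continuous_on {0..t} (velocity z)"
    using continuous_on_subset[OF continuous_on_velocity] assms by auto
  moreover have "velocity z r \<le> a * t" if "r \<in> {0..t}" for r
    using velocity_bounds[of r] that assms a_pos by (auto intro: order_trans mult_left_mono)
  ultimately show ?thesis unfolding picard_def
    using integral_le_const_Icc[of t "velocity z" "a * t"] integral_nonneg_Icc[of 0 t "velocity z"]
      velocity_bounds assms by (auto simp: power2_eq_square mult_ac)
qed

lemma abs_picard_le: "r \<in> {0..b} \<Longrightarrow> \<bar>picard z r\<bar> \<le> a * b\<^sup>2"
  using picard_bounds[of r] a_pos by (auto intro: order_trans mult_left_mono power_mono)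

end

definition lipschitz_const :: "real \<Rightarrow> real" where
  "lipschitz_const b = b\<^sup>2 * a * c * p * (a * b\<^sup>2) powr (p - 1)"

lemma lipschitz_const_nonneg: "0 \<le> lipschitz_const b"
  using a_pos c_pos p_ge_1 by (simp add: lipschitz_const_def)

lemma abs_powr_integral_diff_le:
  assumes "continuous_on {0..t} z" "continuous_on {0..t} w"
    and "\<And>r. r \<in> {0..t} \<Longrightarrow> \<bar>z r\<bar> \<le> B \<and> \<bar>w r\<bar> \<le> B"
  shows "\<bar>powr_integral z t - powr_integral w t\<bar>
           \<le> p * B powr (p - 1) * integral {0..t} (\<lambda>r. \<bar>z r - w r\<bar>)"
proof -
  have int: "(\<lambda>r. z r powr p) integrable_on {0..t}" "(\<lambda>r. w r powr p) integrable_on {0..t}"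
    "(\<lambda>r. \<bar>z r - w r\<bar>) integrable_on {0..t}"
    using assms(1,2) by (auto intro!: integrable_continuous_interval continuous_on_powr_comp continuous_intros)
  hence "\<bar>powr_integral z t - powr_integral w t\<bar> = norm (integral {0..t} (\<lambda>r. z r powr p - w r powr p))"
    by (simp add: powr_integral_def integral_diff)
  also have "\<dots> \<le> integral {0..t} (\<lambda>r. p * B powr (p - 1) * \<bar>z r - w r\<bar>)"
    using int assms(3) abs_powr_diff_le[OF p_ge_1]
    by (intro integral_norm_bound_integral) (auto intro!: integrable_diff integrable_on_mult_right)
  finally show ?thesis by simp
qed

lemma picard_lipschitz:
  assumes "continuous_on {0..b} z" "continuous_on {0..b} w"
    and "\<And>r. r \<in> {0..b} \<Longrightarrow> \<bar>z r\<bar> \<le> a * b\<^sup>2 \<and> \<bar>w r\<bar> \<le> a * b\<^sup>2"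
    and "t \<in> {0..b}"
  shows "\<bar>picard z t - picard w t\<bar> \<le> lipschitz_const b * integral {0..t} (\<lambda>r. \<bar>z r - w r\<bar>)"
proof -
  define J where "J = integral {0..t} (\<lambda>r. \<bar>z r - w r\<bar>)"
  define P where "P = p * (a * b\<^sup>2) powr (p - 1)"
  define L where "L = a * c * (P * J)"
  have sub: "{0..s} \<subseteq> {0..b}" if "s \<in> {0..t}" for s
    using that assms(4) by auto
  have cont_diff: "continuous_on {0..b} (\<lambda>r. \<bar>z r - w r\<bar>)"
    using assms(1,2) by (intro continuous_intros)
  have "0 \<le> P" "0 \<le> J"
    using p_ge_1 unfolding P_def J_def by (auto intro: integral_nonneg_Icc)
  hence "0 \<le> L"
    using a_pos c_pos by (simp add: L_def)
  have accel_diff: "\<bar>accel z s - accel w s\<bar> \<le> L" if "s \<in> {0..t}" for s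
  proof -
    have "\<bar>powr_integral z s - powr_integral w s\<bar> \<le> P * integral {0..s} (\<lambda>r. \<bar>z r - w r\<bar>)"
      unfolding P_def using sub[OF that] assms(3)
      by (intro abs_powr_integral_diff_le continuous_on_subset[OF assms(1)]
          continuous_on_subset[OF assms(2)]) auto
    also have "\<dots> \<le> P * J"
      unfolding J_def using \<open>0 \<le> P\<close> that assms(4)
      by (intro mult_left_mono integral_subset_le integrable_continuous_interval
          continuous_on_subset[OF cont_diff]) auto
    finally have "a * c * \<bar>powr_integral z s - powr_integral w s\<bar> \<le> L"
      unfolding L_def using a_pos c_pos by (intro mult_left_mono) auto
    thus ?thesis
      using abs_accel_diff_le[of z s w] by linarith
  qed
  have velocity_diff: "\<bar>velocity z s - velocity w s\<bar> \<le> b * L" if "s \<in> {0..t}" for s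
  proof -
    have "\<bar>velocity z s - velocity w s\<bar> \<le> s * L"
      unfolding velocity_def using that accel_diff assms sub[OF that]
      by (intro abs_integral_diff_le_const continuous_on_subset[OF continuous_on_accel]) auto
    also have "\<dots> \<le> b * L"
      using that assms(4) \<open>0 \<le> L\<close> by (intro mult_right_mono) auto
    finally show ?thesis .
  qed
  have "\<bar>picard z t - picard w t\<bar> \<le> t * (b * L)"
    unfolding picard_def using velocity_diff assms
    by (intro abs_integral_diff_le_const continuous_on_subset[OF continuous_on_velocity]) auto
  also have "\<dots> \<le> b * (b * L)"
    using assms(4) \<open>0 \<le> L\<close> by (intro mult_right_mono) auto
  finally show ?thesis
    by (simp add: L_def P_def J_def lipschitz_const_def power2_eq_square mult_ac)
qed

lemma picard_fixed_point_unique: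
  assumes "continuous_on {0..b} z" "continuous_on {0..b} w"
    and "\<And>r. r \<in> {0..b} \<Longrightarrow> picard z r = z r" "\<And>r. r \<in> {0..b} \<Longrightarrow> picard w r = w r"
    and "t \<in> {0..b}"
  shows "z t = w t"
proof -
  have bound: "\<bar>z r\<bar> \<le> a * b\<^sup>2 \<and> \<bar>w r\<bar> \<le> a * b\<^sup>2" if "r \<in> {0..b}" for r
    using abs_picard_le[OF assms(1) that] abs_picard_le[OF assms(2) that] assms(3,4)[OF that] by simp
  have "\<bar>z t - w t\<bar> \<le> 2 * a * b\<^sup>2 * (lipschitz_const b * t) ^ n / fact n" for n
  proof (rule volterra_iteration_bound[where d="\<lambda>_ r. z r - w r", OF _ _ _ lipschitz_const_nonneg assms(5)])
    show "continuous_on {0..b} (\<lambda>r. z r - w r)"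
      using assms by (intro continuous_intros)
    show "\<bar>z r - w r\<bar> \<le> 2 * a * b\<^sup>2" if "r \<in> {0..b}" for r
      using bound[OF that] by linarith
    show "\<bar>z r - w r\<bar> \<le> lipschitz_const b * integral {0..r} (\<lambda>s. \<bar>z s - w s\<bar>)"
      if "r \<in> {0..b}" for r
      using picard_lipschitz[OF assms(1,2) bound that] assms(3,4)[OF that] by simp
  qed
  hence "\<bar>z t - w t\<bar> \<le> 0"
    using power_over_fact_tendsto_0 LIMSEQ_le_const by blast
  thus ?thesis by simp
qed

primrec picard_iter :: "nat \<Rightarrow> real \<Rightarrow> real" where
  "picard_iter 0 = (\<lambda>_. 0)"
| "picard_iter (Suc n) = picard (picard_iter n)"

lemma continuous_on_picard_iter: "continuous_on {0..b} (picard_iter n)"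
  by (induction n) (auto intro: continuous_on_picard)

lemma picard_iter_bounds:
  assumes "0 \<le> t"
  shows "0 \<le> picard_iter n t \<and> picard_iter n t \<le> a * t\<^sup>2"
proof (cases n)
  case (Suc m)
  thus ?thesis
    using picard_bounds[OF continuous_on_picard_iter, of t t m] assms by simp
qed (use a_pos in simp)

lemma abs_picard_iter_le: "r \<in> {0..b} \<Longrightarrow> \<bar>picard_iter n r\<bar> \<le> a * b\<^sup>2"
  using picard_iter_bounds[of r n] a_pos by (auto intro: order_trans mult_left_mono power_mono)

lemma abs_picard_iter_diff_le:
  assumes "t \<in> {0..b}"
  shows "\<bar>picard_iter (Suc n) t - picard_iter n t\<bar> \<le> a * b\<^sup>2 * (lipschitz_const b * t) ^ n / fact n"
proof (rule volterra_iteration_bound[where d="\<lambda>n r. picard_iter (Suc n) r - picard_iter n r",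
      OF _ _ _ lipschitz_const_nonneg assms])
  show "continuous_on {0..b} (\<lambda>r. picard_iter (Suc n) r - picard_iter n r)" for n
    by (intro continuous_intros continuous_on_picard_iter)
  show "\<bar>picard_iter (Suc 0) r - picard_iter 0 r\<bar> \<le> a * b\<^sup>2" if "r \<in> {0..b}" for r
    using abs_picard_iter_le[OF that, of 1] by simp
  show "\<bar>picard_iter (Suc (Suc n)) r - picard_iter (Suc n) r\<bar>
          \<le> lipschitz_const b * integral {0..r} (\<lambda>s. \<bar>picard_iter (Suc n) s - picard_iter n s\<bar>)"
    if "r \<in> {0..b}" for r n
  proof -
    have "\<bar>picard_iter (Suc n) s\<bar> \<le> a * b\<^sup>2 \<and> \<bar>picard_iter n s\<bar> \<le> a * b\<^sup>2" if "s \<in> {0..b}" for s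
      using abs_picard_iter_le[OF that] by blast
    from picard_lipschitz[OF continuous_on_picard_iter continuous_on_picard_iter this that]
    show ?thesis by simp
  qed
qed

lemma convergent_picard_iter:
  assumes "0 \<le> t"
  shows "convergent (\<lambda>n. picard_iter n t)"
proof (rule convergent_if_summable_diff)
  define K where "K = lipschitz_const t * t"
  have "summable (\<lambda>n. a * t\<^sup>2 * (inverse (fact n) * K ^ n))"
    by (intro summable_mult summable_exp)
  moreover have "norm (picard_iter (Suc n) t - picard_iter n t) \<le> a * t\<^sup>2 * (inverse (fact n) * K ^ n)" for n
    using abs_picard_iter_diff_le[of t t n] assms by (simp add: K_def field_simps)
  ultimately show "summable (\<lambda>n. picard_iter (Suc n) t - picard_iter n t)"
    by (rule summable_comparison_test'[where N=0])
qed

definition global_solution :: "real \<Rightarrow> real" where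
  "global_solution t = lim (\<lambda>n. picard_iter n t)"

lemma picard_iter_tendsto: "0 \<le> t \<Longrightarrow> (\<lambda>n. picard_iter n t) \<longlonglongrightarrow> global_solution t"
  unfolding global_solution_def by (rule convergent_LIMSEQ_iff[THEN iffD1, OF convergent_picard_iter])

lemma powr_integral_picard_iter_tendsto:
  assumes "0 \<le> t"
  shows "(\<lambda>n. powr_integral (picard_iter n) t) \<longlonglongrightarrow> powr_integral global_solution t"
  unfolding powr_integral_def
proof (rule bounded_convergence_integral_Icc(2)[where M="(a * t\<^sup>2) powr p"])
  show "continuous_on {0..t} (\<lambda>r. picard_iter n r powr p)" for n
    by (intro continuous_on_powr_comp continuous_on_picard_iter)
  show "\<bar>picard_iter n r powr p\<bar> \<le> (a * t\<^sup>2) powr p" if "r \<in> {0..t}" for n r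
    using abs_picard_iter_le[OF that, of n] p_ge_1
    by (auto intro!: powr_mono2 simp: powr_real_abs[of "picard_iter n r"])
  show "(\<lambda>n. picard_iter n r powr p) \<longlonglongrightarrow> global_solution r powr p" if "r \<in> {0..t}" for r
  proof (rule tendsto_powr')
    show "(\<lambda>n. picard_iter n r) \<longlonglongrightarrow> global_solution r"
      using that by (intro picard_iter_tendsto) auto
    show "global_solution r \<noteq> 0 \<or> 0 < p \<and> (\<forall>\<^sub>F n in sequentially. 0 \<le> picard_iter n r)"
      using p_ge_1 picard_iter_bounds that by auto
  qed simp
qed

lemma velocity_picard_iter_tendsto:
  assumes "0 \<le> t"
  shows "accel global_solution integrable_on {0..t}"
    and "(\<lambda>n. velocity (picard_iter n) t) \<longlonglongrightarrow> velocity global_solution t"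
proof -
  have cont: "continuous_on {0..t} (accel (picard_iter n))" for n
    by (intro continuous_on_accel continuous_on_picard_iter)
  have bound: "\<bar>accel (picard_iter n) r\<bar> \<le> a" for n r
    using accel_pos[of "picard_iter n" r] accel_le[of "picard_iter n" r] by simp
  have lim: "(\<lambda>n. accel (picard_iter n) r) \<longlonglongrightarrow> accel global_solution r" if "r \<in> {0..t}" for r
    unfolding accel_def using that by (intro tendsto_intros powr_integral_picard_iter_tendsto) auto
  note convergence = bounded_convergence_integral_Icc[OF cont bound lim]
  show "accel global_solution integrable_on {0..t}"
    by (rule convergence(1))
  show "(\<lambda>n. velocity (picard_iter n) t) \<longlonglongrightarrow> velocity global_solution t"
    unfolding velocity_def by (rule convergence(2))
qed

lemma picard_picard_iter_tendsto:
  assumes "0 \<le> t"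
  shows "velocity global_solution integrable_on {0..t}"
    and "(\<lambda>n. picard (picard_iter n) t) \<longlonglongrightarrow> picard global_solution t"
proof -
  have cont: "continuous_on {0..t} (velocity (picard_iter n))" for n
    by (intro continuous_on_velocity continuous_on_picard_iter)
  have bound: "\<bar>velocity (picard_iter n) r\<bar> \<le> a * t" if "r \<in> {0..t}" for n r
    using velocity_bounds[OF continuous_on_picard_iter that, of n] that a_pos
    by (auto intro: order_trans mult_left_mono)
  have lim: "(\<lambda>n. velocity (picard_iter n) r) \<longlonglongrightarrow> velocity global_solution r" if "r \<in> {0..t}" for r
    using that by (intro velocity_picard_iter_tendsto) auto
  note convergence = bounded_convergence_integral_Icc[OF cont bound lim]
  show "velocity global_solution integrable_on {0..t}"
    by (rule convergence(1))
  show "(\<lambda>n. picard (picard_iter n) t) \<longlonglongrightarrow> picard global_solution t"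
    unfolding picard_def by (rule convergence(2))
qed

lemma picard_global_solution:
  assumes "0 \<le> t"
  shows "picard global_solution t = global_solution t"
proof -
  have "(\<lambda>n. picard (picard_iter n) t) \<longlonglongrightarrow> global_solution t"
    using LIMSEQ_Suc[OF picard_iter_tendsto[OF assms]] by simp
  thus ?thesis
    using LIMSEQ_unique picard_picard_iter_tendsto(2)[OF assms] by blast
qed

lemma continuous_on_global_solution: "continuous_on {0..b} global_solution"
proof (cases "0 \<le> b")
  case True
  have "continuous_on {0..b} (picard global_solution)"
    unfolding picard_def[abs_def]
    by (rule indefinite_integral_continuous_1[OF picard_picard_iter_tendsto(1)[OF True]])
  thus ?thesis
    by (rule continuous_on_cong[THEN iffD1, rotated 2]) (auto simp: picard_global_solution)
qed simp

lemma ivp_solution_global_solution: "ivp_solution p c a {0..} global_solution"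
  unfolding ivp_solution_def
proof (intro exI conjI ballI)
  show "global_solution 0 = 0" "velocity global_solution 0 = 0" "accel global_solution 0 = a"
    using picard_global_solution[of 0] by (simp_all add: picard_def velocity_def accel_def powr_integral_def)
  fix t :: real
  assume "t \<in> {0..}"
  hence t: "t \<in> {0..t + 1}" and at: "at t within {0..t + 1} = at t within {0..}"
    by (auto intro: at_within_Icc_eq_Ici)
  have "(picard global_solution has_real_derivative velocity global_solution t) (at t within {0..t + 1})"
    by (rule picard_has_real_derivative[OF continuous_on_global_solution t])
  hence "(global_solution has_real_derivative velocity global_solution t) (at t within {0..t + 1})"
    by (rule has_field_derivative_transform_within[where d=1]) (use t picard_global_solution in auto)
  thus "(global_solution has_real_derivative velocity global_solution t) (at t within {0..})"
    by (simp add: at)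
  show "(velocity global_solution has_real_derivative accel global_solution t) (at t within {0..})"
    using velocity_has_real_derivative[OF continuous_on_global_solution t] by (simp add: at)
  show "(accel global_solution has_real_derivative (- c * global_solution t powr p * accel global_solution t))
          (at t within {0..})"
    using accel_has_real_derivative[OF continuous_on_global_solution t] by (simp add: at)
qed

lemma eq_accel_if_has_real_derivative:
  assumes "continuous_on {0..t} y" "x2 0 = a"
    and "\<And>r. r \<in> {0..t} \<Longrightarrow> (x2 has_real_derivative - c * y r powr p * x2 r) (at r within {0..t})"
    and "r \<in> {0..t}"
  shows "x2 r = accel y r"
proof -
  define E where "E r = x2 r * exp (c * powr_integral y r)" for r
  have "(E has_real_derivative 0) (at r within {0..t})" if "r \<in> {0..t}" for r
    unfolding E_def using that assms(3) powr_integral_has_real_derivative[OF assms(1)]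
    by (auto intro!: derivative_eq_intros simp: algebra_simps)
  hence "\<exists>C. \<forall>r \<in> {0..t}. E r = C"
    by (intro has_field_derivative_zero_constant) auto
  moreover have "E 0 = a"
    using assms(2) by (simp add: E_def powr_integral_def)
  ultimately have "E r = a"
    using assms(4) by (metis atLeastAtMost_iff order.refl order.trans)
  thus ?thesis
    by (simp add: E_def accel_def exp_minus field_simps)
qed

lemma picard_eq_if_ivp_solution:
  assumes "ivp_solution p c a {0..<T} y" "t \<in> {0..<T}"
  shows "continuous_on {0..t} y" and "r \<in> {0..t} \<Longrightarrow> picard y r = y r"
proof -
  obtain y1 y2 where init: "y 0 = 0" "y1 0 = 0" "y2 0 = a"
    and deriv: "\<And>r. r \<in> {0..<T} \<Longrightarrow> (y has_real_derivative y1 r) (at r within {0..<T}) \<and>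
                  (y1 has_real_derivative y2 r) (at r within {0..<T}) \<and>
                  (y2 has_real_derivative - c * y r powr p * y2 r) (at r within {0..<T})"
    using assms(1) unfolding ivp_solution_def by blast
  have deriv_on: "(y has_real_derivative y1 r) (at r within S)" "(y1 has_real_derivative y2 r) (at r within S)"
    "(y2 has_real_derivative - c * y r powr p * y2 r) (at r within S)"
    if "r \<in> S" "S \<subseteq> {0..t}" for r S
  proof -
    have "r \<in> {0..<T}" "S \<subseteq> {0..<T}"
      using that assms(2) by auto
    thus "(y has_real_derivative y1 r) (at r within S)" "(y1 has_real_derivative y2 r) (at r within S)"
      "(y2 has_real_derivative - c * y r powr p * y2 r) (at r within S)"
      using deriv by (meson DERIV_subset)+
  qed
  show cont: "continuous_on {0..t} y"
    by (rule DERIV_continuous_on[OF deriv_on(1)]) auto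
  have accel: "accel y r = y2 r" if "r \<in> {0..t}" for r
    by (rule eq_accel_if_has_real_derivative[OF cont init(3) deriv_on(3) that, symmetric]) auto
  have velocity: "velocity y r = y1 r" if "r \<in> {0..t}" for r
  proof -
    have "velocity y r = integral {0..r} y2"
      unfolding velocity_def using that by (intro integral_cong accel) auto
    also have "\<dots> = y1 r"
      using that by (intro integral_eq_of_deriv init deriv_on) auto
    finally show ?thesis .
  qed
  show "picard y r = y r" if "r \<in> {0..t}"
  proof -
    have "picard y r = integral {0..r} y1"
      unfolding picard_def using that by (intro integral_cong velocity) auto
    also have "\<dots> = y r"
      using that by (intro integral_eq_of_deriv init deriv_on) auto
    finally show ?thesis .
  qed
qed

lemma ivp_solution_eq_global_solution:
  assumes "ivp_solution p c a {0..<T} y" "t \<in> {0..<T}"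
  shows "y t = global_solution t"
proof (rule picard_fixed_point_unique[of t y global_solution t])
  show "continuous_on {0..t} y"
    by (rule picard_eq_if_ivp_solution(1)[OF assms])
  show "picard y r = y r" if "r \<in> {0..t}" for r
    by (rule picard_eq_if_ivp_solution(2)[OF assms that])
  show "picard global_solution r = global_solution r" if "r \<in> {0..t}" for r
    using that by (intro picard_global_solution) auto
qed (use assms(2) continuous_on_global_solution in auto)

end

theorem lemma1:
  fixes p c a :: real
  assumes "p \<ge> 1" and "c > 0" and "a > 0"
  shows "\<exists>x. ivp_solution p c a {0..} x \<and>
           (\<forall>T y. T > 0 \<longrightarrow> ivp_solution p c a {0..<T} y \<longrightarrow> (\<forall>t\<in>{0..<T}. y t = x t))"
proof -
  interpret third_order_ivp p c a
    using assms by unfold_locales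
  show ?thesis
  proof (intro exI[of _ global_solution] conjI allI impI ballI)
    show "ivp_solution p c a {0..} global_solution"
      by (rule ivp_solution_global_solution)
    show "y t = global_solution t" if "ivp_solution p c a {0..<T} y" "t \<in> {0..<T}" for T y t
      by (rule ivp_solution_eq_global_solution[OF that])
  qed
qed

end
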